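(* If a digraph $H$ has tree duality, then its arc graph $\delta H$ also has tree duality.
   Context: Digraphs are finite, $G=(V,A)$ with $A\subseteq V\times V$; homomorphisms are arc-preserving vertex maps. A set $\mathcal F$ of digraphs is a complete set of obstructions for $H$ if for every digraph $G$: $G\to H$ iff no $F\in\mathcal F$ admits a homomorphism to $G$. $H$ has tree duality if it has a complete set of obstructions consisting of oriented trees (digraphs whose underlying undirected graph is a tree). The arc graph of $G=(V,A)$ is $\delta G=(A,\delta A)$ with $\delta A=\{((u,v),(v,w)) : (u,v),(v,w)\in A\}$. *)

theory Defs
  imports Main
begin

type_synonym 'a digraph = "'a set \<times> ('a \<times> 'a) set"

definition verts :: "'a digraph \<Rightarrow> 'a set" where "verts G = fst G"
definition arcs :: "'a digraph \<Rightarrow> ('a \<times> 'a) set" where "arcs G = snd G"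

definition digraph :: "'a digraph \<Rightarrow> bool" where
  "digraph G \<longleftrightarrow> finite (verts G) \<and> arcs G \<subseteq> verts G \<times> verts G"

definition is_hom :: "('a \<Rightarrow> 'b) \<Rightarrow> 'a digraph \<Rightarrow> 'b digraph \<Rightarrow> bool" where
  "is_hom f G H \<longleftrightarrow> (\<forall>v\<in>verts G. f v \<in> verts H) \<and>
                     (\<forall>u v. (u, v) \<in> arcs G \<longrightarrow> (f u, f v) \<in> arcs H)"

definition hom_to :: "'a digraph \<Rightarrow> 'b digraph \<Rightarrow> bool" (infix "\<rightarrow>\<^sub>h" 50) where
  "G \<rightarrow>\<^sub>h H \<longleftrightarrow> (\<exists>f. is_hom f G H)"

definition oriented_tree :: "'a digraph \<Rightarrow> bool" where
  "oriented_tree T \<longleftrightarrow> digraph T \<and> verts T \<noteq> {} \<and>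
     (\<forall>u v. (u, v) \<in> arcs T \<longrightarrow> u \<noteq> v \<and> (v, u) \<notin> arcs T) \<and>
     (\<forall>u\<in>verts T. \<forall>v\<in>verts T. (u, v) \<in> (arcs T \<union> (arcs T)\<inverse>)\<^sup>*) \<and>
     card (arcs T) + 1 = card (verts T)"

text \<open>Complete set of obstructions. Every finite digraph is isomorphic to one on
  natural-number vertices, so test digraphs and obstructions live on \<open>nat\<close>.\<close>
definition complete_obstructions :: "nat digraph set \<Rightarrow> 'a digraph \<Rightarrow> bool" where
  "complete_obstructions \<F> H \<longleftrightarrow> (\<forall>F\<in>\<F>. digraph F) \<and>
     (\<forall>G :: nat digraph. digraph G \<longrightarrow> (G \<rightarrow>\<^sub>h H \<longleftrightarrow> \<not> (\<exists>F\<in>\<F>. F \<rightarrow>\<^sub>h G)))"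

definition tree_duality :: "'a digraph \<Rightarrow> bool" where
  "tree_duality H \<longleftrightarrow> (\<exists>\<F>. (\<forall>F\<in>\<F>. oriented_tree F) \<and> complete_obstructions \<F> H)"

definition arc_graph :: "'a digraph \<Rightarrow> ('a \<times> 'a) digraph" where
  "arc_graph G = (arcs G, {((u, v), (v', w)). (u, v) \<in> arcs G \<and> (v', w) \<in> arcs G \<and> v' = v})"

end

theory Submission
  imports Defs
begin

(* The proof goes through the characterisation of tree duality by the power digraph P(H)
   (Feder-Vardi): the nonempty vertex sets of H, with X \<rightarrow> Y whenever
   every element of X has an out-neighbour in Y and every element of Y an in-neighbour in X.
   For a finite digraph H,  H has tree duality  \<longleftrightarrow>  P(H) \<rightarrow> H.
   (\<Longrightarrow>) An oriented tree mapping to P(H) maps to H (peel off leaves), so no obstruction maps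
       to P(H).
   (\<Longleftarrow>) If every oriented tree mapping to G maps to H, then G \<rightarrow> P(H): v is sent to the set
       of vertices at which every rooted tree mapping to G at v maps into H; finitely many
       separating trees are glued at their roots.
   Finally a homomorphism \<phi>: P(H) \<rightarrow> H yields P(\<delta>H) \<rightarrow> \<delta>H, X \<mapsto> (\<phi>(tails of X), \<phi>(heads of X)). *)

abbreviation orient :: "bool \<Rightarrow> 'a \<Rightarrow> 'a \<Rightarrow> 'a \<times> 'a" where
  "orient b x y \<equiv> (if b then (x, y) else (y, x))"

abbreviation links :: "'a digraph \<Rightarrow> ('a \<times> 'a) set" where
  "links G \<equiv> arcs G \<union> (arcs G)\<inverse>"

lemma hom_comp: "is_hom f G H \<Longrightarrow> is_hom g H K \<Longrightarrow> is_hom (g \<circ> f) G K"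
  by (auto simp: is_hom_def)

lemma hom_to_trans: "G \<rightarrow>\<^sub>h H \<Longrightarrow> H \<rightarrow>\<^sub>h K \<Longrightarrow> G \<rightarrow>\<^sub>h K"
  unfolding hom_to_def using hom_comp by blast

lemma hom_to_refl: "G \<rightarrow>\<^sub>h G"
  unfolding hom_to_def is_hom_def by (metis id_apply)

(* If h is injective on the vertices,
   relabel h G is an isomorphic copy of G; this is how arbitrary finite digraphs are
   transported to the vertex type nat used by complete_obstructions. *)
definition relabel :: "('a \<Rightarrow> 'b) \<Rightarrow> 'a digraph \<Rightarrow> 'b digraph" where
  "relabel h G = (h ` verts G, map_prod h h ` arcs G)"

lemma verts_relabel [simp]: "verts (relabel h G) = h ` verts G"
  and arcs_relabel [simp]: "arcs (relabel h G) = map_prod h h ` arcs G"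
  by (simp_all add: relabel_def verts_def arcs_def)

lemma digraph_relabel: "digraph G \<Longrightarrow> digraph (relabel h G)"
  unfolding digraph_def by auto

lemma hom_relabel: "is_hom h G (relabel h G)"
  by (force simp: is_hom_def)

lemma hom_relabel_inv:
  "digraph G \<Longrightarrow> inj_on h (verts G) \<Longrightarrow> is_hom (inv_into (verts G) h) (relabel h G) G"
  unfolding is_hom_def digraph_def by (auto simp: inv_into_f_f)

lemma relabel_iso:
  assumes "digraph G" "inj_on h (verts G)"
  shows "relabel h G \<rightarrow>\<^sub>h K \<longleftrightarrow> G \<rightarrow>\<^sub>h K" "K \<rightarrow>\<^sub>h relabel h G \<longleftrightarrow> K \<rightarrow>\<^sub>h G"
  using hom_relabel hom_relabel_inv[OF assms] hom_to_trans unfolding hom_to_def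
  by meson+

lemma nat_relabelling:
  assumes "digraph (G :: 'a digraph)"
  obtains h :: "'a \<Rightarrow> nat" where "inj_on h (verts G)"
  using assms finite_imp_inj_to_nat_seg unfolding digraph_def by blast

lemma oriented_tree_relabel:
  assumes T: "oriented_tree G" and inj: "inj_on h (verts G)"
  shows "oriented_tree (relabel h G)"
proof -
  have dg: "digraph G" and sub: "arcs G \<subseteq> verts G \<times> verts G"
    using T by (auto simp: oriented_tree_def digraph_def)
  have injA: "inj_on (map_prod h h) (verts G \<times> verts G)"
    using map_prod_inj_on[OF inj inj] .
  have mem: "(h u, h v) \<in> arcs (relabel h G) \<longleftrightarrow> (u, v) \<in> arcs G"
    if "u \<in> verts G" "v \<in> verts G" for u v
    using inj_on_image_mem_iff[OF injA _ sub, of "(u, v)"] that by simp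
  have card: "card (arcs (relabel h G)) + 1 = card (verts (relabel h G))"
    using T card_image[OF inj] card_image[OF inj_on_subset[OF injA sub]]
    by (simp add: oriented_tree_def)
  have oriented: "u \<noteq> v \<and> (v, u) \<notin> arcs (relabel h G)" if uv: "(u, v) \<in> arcs (relabel h G)" for u v
  proof -
    obtain a b where ab: "(a, b) \<in> arcs G" "u = h a" "v = h b" using uv by auto
    then have "a \<in> verts G" "b \<in> verts G" using sub by auto
    then show ?thesis
      using T ab mem inj_onD[OF inj] unfolding oriented_tree_def by metis
  qed
  have lift: "(h a, h b) \<in> (links (relabel h G))\<^sup>*" if "(a, b) \<in> (links G)\<^sup>*" for a b
    using that
  proof (induction b rule: rtrancl_induct)
    case (step y z)
    then have "(h y, h z) \<in> links (relabel h G)" by (auto intro: rev_image_eqI)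
    with step.IH show ?case by (rule rtrancl_into_rtrancl)
  qed simp
  have "\<forall>u\<in>verts (relabel h G). \<forall>v\<in>verts (relabel h G). (u, v) \<in> (links (relabel h G))\<^sup>*"
    using T lift unfolding oriented_tree_def by auto
  then show ?thesis
    using T digraph_relabel[OF dg] card oriented unfolding oriented_tree_def by auto
qed

(* Rooted oriented trees as a datatype: a node carries a list of subtrees, each tagged with
   the orientation of the arc between the node and the subtree's root (True: away from the
   node). The datatype gives structural induction and makes gluing trees at their roots
   trivial. *)
datatype rtree = Node "(bool \<times> rtree) list"

lemma size_child [termination_simp]:
  "i < length cs \<Longrightarrow> size (snd (cs ! i)) < Suc (size_list (\<lambda>c. Suc (size (snd c))) cs)"
  by (meson less_SucI lessI nth_mem size_list_estimation)

fun maps_at :: "'b digraph \<Rightarrow> rtree \<Rightarrow> 'b \<Rightarrow> bool" where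
  "maps_at K (Node cs) x \<longleftrightarrow> x \<in> verts K \<and>
     (\<forall>c\<in>set cs. \<exists>y. orient (fst c) x y \<in> arcs K \<and> maps_at K (snd c) y)"

(* The concrete digraph of a rooted tree: vertices are paths of child indices from the
   root (the root is []), and every child i of a node contributes the arc between the node
   and i, oriented as its tag says. *)
fun rverts :: "rtree \<Rightarrow> nat list set" where
  "rverts (Node cs) = insert [] (\<Union>i<length cs. (#) i ` rverts (snd (cs ! i)))"

fun rarcs :: "rtree \<Rightarrow> (nat list \<times> nat list) set" where
  "rarcs (Node cs) = (\<Union>i<length cs.
     insert (orient (fst (cs ! i)) [] [i]) (map_prod ((#) i) ((#) i) ` rarcs (snd (cs ! i))))"

declare rverts.simps [simp del] rarcs.simps [simp del]

lemma rtree_induct: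
  "(\<And>cs. (\<And>i. i < length cs \<Longrightarrow> P (snd (cs ! i))) \<Longrightarrow> P (Node cs)) \<Longrightarrow> P t"
  by (induction t rule: rverts.induct) auto

definition rdig :: "rtree \<Rightarrow> nat list digraph" where
  "rdig t = (rverts t, rarcs t)"

lemma verts_rdig [simp]: "verts (rdig t) = rverts t"
  and arcs_rdig [simp]: "arcs (rdig t) = rarcs t"
  by (simp_all add: rdig_def verts_def arcs_def)

lemma root_rverts [simp]: "[] \<in> rverts t"
  by (cases t) (simp add: rverts.simps)

lemma rarcs_child:
  "i < length cs \<Longrightarrow> orient (fst (cs ! i)) [] [i] \<in> rarcs (Node cs)"
  "i < length cs \<Longrightarrow> (a, b) \<in> rarcs (snd (cs ! i)) \<Longrightarrow> (i # a, i # b) \<in> rarcs (Node cs)"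
  by (force simp: rarcs.simps)+

lemma rarcs_cases:
  assumes "(u, v) \<in> rarcs (Node cs)"
  obtains i where "i < length cs" "(u, v) = orient (fst (cs ! i)) [] [i]"
  | i a b where "i < length cs" "(a, b) \<in> rarcs (snd (cs ! i))" "u = i # a" "v = i # b"
  using assms by (auto simp: rarcs.simps)

lemma finite_rverts: "finite (rverts t)"
  by (induction t rule: rtree_induct) (auto simp: rverts.simps)

lemma rarcs_subset: "rarcs t \<subseteq> rverts t \<times> rverts t"
proof (induction t rule: rtree_induct)
  case (1 cs)
  have "[i] \<in> rverts (Node cs)" "i # a \<in> rverts (Node cs)"
    if "i < length cs" "a \<in> rverts (snd (cs ! i))" for i a
    using that root_rverts[of "snd (cs ! i)"] by (force simp: rverts.simps)+
  with 1 show ?case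
    by (auto elim!: rarcs_cases split: if_splits)
qed

lemma finite_rarcs: "finite (rarcs t)"
  using rarcs_subset finite_rverts by (meson finite_SigmaI finite_subset)

lemma rarcs_oriented: "(u, v) \<in> rarcs t \<Longrightarrow> u \<noteq> v \<and> (v, u) \<notin> rarcs t"
proof (induction t arbitrary: u v rule: rtree_induct)
  case (1 cs)
  then show ?case by (auto simp: rarcs.simps split: if_splits)
qed

lemma links_rtrancl_sym: "(u, v) \<in> (links G)\<^sup>* \<Longrightarrow> (v, u) \<in> (links G)\<^sup>*"
  by (rule symD[OF sym_rtrancl]) (auto simp: sym_def)

lemma root_connected: "p \<in> rverts t \<Longrightarrow> ([], p) \<in> (links (rdig t))\<^sup>*"
proof (induction t arbitrary: p rule: rtree_induct)
  case (1 cs)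
  let ?R = "links (rdig (Node cs))"
  show ?case
  proof (cases p)
    case (Cons i q)
    then have i: "i < length cs" and q: "q \<in> rverts (snd (cs ! i))"
      using 1(2) by (auto simp: rverts.simps)
    have lift: "(i # a, i # b) \<in> ?R\<^sup>*" if "(a, b) \<in> (links (rdig (snd (cs ! i))))\<^sup>*" for a b
      using that
    proof (induction b rule: rtrancl_induct)
      case (step y z)
      then have "(i # y, i # z) \<in> ?R" using rarcs_child(2)[OF i] by auto
      with step.IH show ?case by (rule rtrancl_into_rtrancl)
    qed simp
    have "([], [i]) \<in> ?R" using rarcs_child(1)[OF i] by (auto split: if_splits)
    with lift[OF 1(1)[OF i q]] show ?thesis
      using Cons by (meson converse_rtrancl_into_rtrancl)
  qed simp
qed

(* A rooted tree has one arc fewer than vertices; induction step: the children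
   contribute their vertex and arc counts plus one arc each, the root one vertex. *)
lemma card_rtree: "card (rarcs t) + 1 = card (rverts t)"
proof (induction t rule: rtree_induct)
  case (1 cs)
  let ?n = "length cs"
  define V where "V i = (#) i ` rverts (snd (cs ! i))" for i
  define A where "A i = insert (orient (fst (cs ! i)) [] [i])
    (map_prod ((#) i) ((#) i) ` rarcs (snd (cs ! i)))" for i
  have card_V: "card (V i) = card (rverts (snd (cs ! i)))" for i
    unfolding V_def by (rule card_image) (simp add: inj_on_def)
  have card_A: "card (A i) = Suc (card (rarcs (snd (cs ! i))))" for i
  proof -
    have "card (map_prod ((#) i) ((#) i) ` rarcs (snd (cs ! i))) = card (rarcs (snd (cs ! i)))"
      by (rule card_image) (auto simp: inj_on_def)
    then show ?thesis unfolding A_def by (subst card_insert_disjoint) (auto simp: finite_rarcs)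
  qed
  have "card (rverts (Node cs)) = Suc (card (\<Union>i<?n. V i))"
    by (auto simp: rverts.simps V_def finite_rverts card_insert_if)
  also have "card (\<Union>i<?n. V i) = (\<Sum>i<?n. card (V i))"
    by (rule card_UN_disjoint) (auto simp: V_def finite_rverts)
  finally have verts: "card (rverts (Node cs)) = Suc (\<Sum>i<?n. card (rverts (snd (cs ! i))))"
    by (simp add: card_V)
  have "card (rarcs (Node cs)) = card (\<Union>i<?n. A i)"
    by (simp add: rarcs.simps A_def)
  also have "\<dots> = (\<Sum>i<?n. card (A i))"
    by (rule card_UN_disjoint) (auto simp: A_def finite_rarcs split: if_splits)
  finally have "card (rarcs (Node cs)) = (\<Sum>i<?n. card (rverts (snd (cs ! i))))"
    using 1 by (simp add: card_A)
  with verts show ?case by simp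
qed

lemma oriented_tree_rdig: "oriented_tree (rdig t)"
proof -
  have "(u, v) \<in> (links (rdig t))\<^sup>*" if "u \<in> rverts t" "v \<in> rverts t" for u v
    using root_connected[OF that(1), THEN links_rtrancl_sym] root_connected[OF that(2)]
    by (rule rtrancl_trans)
  moreover have "rverts t \<noteq> {}" using root_rverts by blast
  ultimately show ?thesis
    unfolding oriented_tree_def digraph_def
    using finite_rverts rarcs_subset card_rtree rarcs_oriented by auto
qed

lemma maps_at_imp_hom: "maps_at K t x \<Longrightarrow> \<exists>f. is_hom f (rdig t) K \<and> f [] = x"
proof (induction t arbitrary: x rule: rtree_induct)
  case (1 cs)
  have "\<forall>i. \<exists>f. i < length cs \<longrightarrow>
          is_hom f (rdig (snd (cs ! i))) K \<and> orient (fst (cs ! i)) x (f []) \<in> arcs K"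
  proof
    fix i
    show "\<exists>f. i < length cs \<longrightarrow>
          is_hom f (rdig (snd (cs ! i))) K \<and> orient (fst (cs ! i)) x (f []) \<in> arcs K"
    proof (cases "i < length cs")
      case True
      then have "cs ! i \<in> set cs" by simp
      then obtain y where "orient (fst (cs ! i)) x y \<in> arcs K" "maps_at K (snd (cs ! i)) y"
        using "1.prems" by auto
      with 1(1)[OF True] show ?thesis by blast
    qed simp
  qed
  then obtain F where F: "\<And>i. i < length cs \<Longrightarrow>
      is_hom (F i) (rdig (snd (cs ! i))) K \<and> orient (fst (cs ! i)) x (F i []) \<in> arcs K"
    by metis
  define f where "f p = (case p of [] \<Rightarrow> x | i # q \<Rightarrow> F i q)" for p
  have "is_hom f (rdig (Node cs)) K"
    unfolding is_hom_def
  proof (intro conjI allI impI ballI)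
    fix v assume "v \<in> verts (rdig (Node cs))"
    then show "f v \<in> verts K" using "1.prems" F by (auto simp: rverts.simps f_def is_hom_def)
  next
    fix u v assume "(u, v) \<in> arcs (rdig (Node cs))"
    then have "(u, v) \<in> rarcs (Node cs)" by simp
    then show "(f u, f v) \<in> arcs K"
    proof (cases rule: rarcs_cases)
      case (1 i)
      then show ?thesis using F[of i] by (auto simp: f_def split: if_splits)
    next
      case (2 i a b)
      then show ?thesis using F[of i] by (auto simp: f_def is_hom_def)
    qed
  qed
  then show ?case by (auto simp: f_def)
qed

lemma hom_imp_maps_at: "is_hom f (rdig t) K \<Longrightarrow> maps_at K t (f [])"
proof (induction t arbitrary: f rule: rtree_induct)
  case (1 cs)
  have "\<exists>y. orient (fst c) (f []) y \<in> arcs K \<and> maps_at K (snd c) y" if c_in: "c \<in> set cs" for c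
  proof -
    obtain i where i: "i < length cs" and c: "c = cs ! i"
      using c_in by (auto simp: in_set_conv_nth)
    have "is_hom (f \<circ> (#) i) (rdig (snd (cs ! i))) K"
      using "1.prems" i unfolding is_hom_def
      by (auto simp: rverts.simps dest: rarcs_child(2)[OF i])
    then have "maps_at K (snd (cs ! i)) (f [i])" using 1(1)[OF i] by fastforce
    moreover have "orient (fst (cs ! i)) (f []) (f [i]) \<in> arcs K"
      using "1.prems" rarcs_child(1)[OF i] unfolding is_hom_def by (auto split: if_splits)
    ultimately show ?thesis unfolding c by blast
  qed
  moreover have "f [] \<in> verts K" using "1.prems" by (auto simp: is_hom_def)
  ultimately show ?case by simp
qed

lemma rdig_hom_iff: "rdig t \<rightarrow>\<^sub>h K \<longleftrightarrow> (\<exists>x. maps_at K t x)"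
proof
  assume "rdig t \<rightarrow>\<^sub>h K"
  then obtain f where "is_hom f (rdig t) K" unfolding hom_to_def ..
  then have "maps_at K t (f [])" by (rule hom_imp_maps_at)
  then show "\<exists>x. maps_at K t x" ..
next
  assume "\<exists>x. maps_at K t x"
  then obtain x where "maps_at K t x" ..
  then obtain f where "is_hom f (rdig t) K" using maps_at_imp_hom by metis
  then show "rdig t \<rightarrow>\<^sub>h K" by (auto simp: hom_to_def)
qed

fun children :: "rtree \<Rightarrow> (bool \<times> rtree) list" where
  "children (Node cs) = cs"

definition glue :: "rtree list \<Rightarrow> rtree" where
  "glue ts = Node (concat (map children ts))"

lemma maps_at_glue: "maps_at K (glue ts) x \<longleftrightarrow> x \<in> verts K \<and> (\<forall>t\<in>set ts. maps_at K t x)"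
proof -
  have "maps_at K t x \<longleftrightarrow> x \<in> verts K \<and>
          (\<forall>c\<in>set (children t). \<exists>y. orient (fst c) x y \<in> arcs K \<and> maps_at K (snd c) y)" for t
    by (cases t) simp
  then show ?thesis unfolding glue_def by auto
qed

(* This is implied by G \<rightarrow>\<^sub>h K, and tree duality of K is exactly the converse
   implication; the characterisation below derives that converse from P(K) \<rightarrow> K. *)
definition tree_dominated :: "'a digraph \<Rightarrow> 'b digraph \<Rightarrow> bool" where
  "tree_dominated G K \<longleftrightarrow> (\<forall>F :: nat digraph. oriented_tree F \<longrightarrow> F \<rightarrow>\<^sub>h G \<longrightarrow> F \<rightarrow>\<^sub>h K)"

(* Tree domination transfers from oriented trees to rooted trees (via a relabelling of
   rdig t to nat); the image of the root is not controlled. *)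
lemma tree_dominated_maps_at:
  assumes dom: "tree_dominated G K" and maps: "maps_at G t v"
  shows "\<exists>x. maps_at K t x"
proof -
  have dig: "digraph (rdig t)" using oriented_tree_rdig unfolding oriented_tree_def by blast
  then obtain e :: "nat list \<Rightarrow> nat" where e: "inj_on e (verts (rdig t))"
    by (rule nat_relabelling)
  note iso = relabel_iso(1)[OF dig e]
  have tree: "oriented_tree (relabel e (rdig t))"
    using oriented_tree_rdig e by (rule oriented_tree_relabel)
  have "rdig t \<rightarrow>\<^sub>h G" using maps by (auto simp: rdig_hom_iff)
  then have "relabel e (rdig t) \<rightarrow>\<^sub>h G" using iso by blast
  then have "relabel e (rdig t) \<rightarrow>\<^sub>h K"
    using dom tree unfolding tree_dominated_def by (elim allE impE)
  then have "rdig t \<rightarrow>\<^sub>h K" using iso by blast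
  then show ?thesis by (simp add: rdig_hom_iff)
qed

(* Finitely many rooted trees, each mapping to G at v but not to K at a prescribed vertex,
   glue to one tree mapping to G at v but to K at none of these vertices. *)
lemma separating_tree:
  assumes "finite Y" and "v \<in> verts G" and "\<forall>y\<in>Y. \<exists>t. maps_at G t v \<and> \<not> maps_at K t y"
  shows "\<exists>t. maps_at G t v \<and> (\<forall>y\<in>Y. \<not> maps_at K t y)"
proof -
  obtain T where T: "\<forall>y\<in>Y. maps_at G (T y) v \<and> \<not> maps_at K (T y) y"
    using bchoice[OF assms(3)] by blast
  obtain ys where ys: "set ys = Y" using finite_list[OF assms(1)] by blast
  have "maps_at G (glue (map T ys)) v"
    using T ys assms(2) by (simp add: maps_at_glue)
  moreover have "\<not> maps_at K (glue (map T ys)) y" if "y \<in> Y" for y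
  proof -
    have "T y \<in> set (map T ys)" using ys that by simp
    then show ?thesis using maps_at_glue[of K "map T ys" y] T that by blast
  qed
  ultimately show ?thesis by blast
qed

definition power_digraph :: "'a digraph \<Rightarrow> 'a set digraph" where
  "power_digraph H = ({X. X \<subseteq> verts H \<and> X \<noteq> {}},
     {(X, Y). X \<subseteq> verts H \<and> X \<noteq> {} \<and> Y \<subseteq> verts H \<and> Y \<noteq> {} \<and>
        (\<forall>x\<in>X. \<exists>y\<in>Y. (x, y) \<in> arcs H) \<and> (\<forall>y\<in>Y. \<exists>x\<in>X. (x, y) \<in> arcs H)})"

lemma verts_power: "verts (power_digraph H) = {X. X \<subseteq> verts H \<and> X \<noteq> {}}"
  and arcs_power: "arcs (power_digraph H) = {(X, Y). X \<subseteq> verts H \<and> X \<noteq> {} \<and> Y \<subseteq> verts H \<and> Y \<noteq> {} \<and>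
        (\<forall>x\<in>X. \<exists>y\<in>Y. (x, y) \<in> arcs H) \<and> (\<forall>y\<in>Y. \<exists>x\<in>X. (x, y) \<in> arcs H)}"
  by (simp_all add: power_digraph_def verts_def arcs_def)

lemma digraph_power: "digraph H \<Longrightarrow> digraph (power_digraph H)"
  unfolding digraph_def verts_power arcs_power by auto

lemma power_arc_pull:
  "orient b X Y \<in> arcs (power_digraph H) \<Longrightarrow> y \<in> Y \<Longrightarrow> \<exists>x\<in>X. orient b x y \<in> arcs H"
  by (cases b) (auto simp: arcs_power)

(* Under tree domination it is nonempty, and it
   varies along arcs as required for a homomorphism into P(K). *)
definition tree_profile :: "'a digraph \<Rightarrow> 'b digraph \<Rightarrow> 'a \<Rightarrow> 'b set" where
  "tree_profile G K v = {x \<in> verts K. \<forall>t. maps_at G t v \<longrightarrow> maps_at K t x}"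

lemma not_in_tree_profile:
  "y \<in> verts K \<Longrightarrow> y \<notin> tree_profile G K v \<Longrightarrow> \<exists>t. maps_at G t v \<and> \<not> maps_at K t y"
  by (auto simp: tree_profile_def)

(* If the profile of v were empty, separating_tree would give a single tree mapping to G
   at v but to K at no vertex, contradicting tree domination. *)
lemma tree_profile_nonempty:
  assumes dK: "digraph K" and dom: "tree_dominated G K" and v: "v \<in> verts G"
  shows "tree_profile G K v \<noteq> {}"
proof
  assume empty: "tree_profile G K v = {}"
  have "\<forall>y\<in>verts K. \<exists>t. maps_at G t v \<and> \<not> maps_at K t y"
  proof
    fix y assume "y \<in> verts K"
    then show "\<exists>t. maps_at G t v \<and> \<not> maps_at K t y" using empty by (intro not_in_tree_profile) auto
  qed
  moreover have "finite (verts K)" using dK by (simp add: digraph_def)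
  ultimately obtain t where t: "maps_at G t v" and none: "\<forall>y\<in>verts K. \<not> maps_at K t y"
    using separating_tree v by metis
  obtain x where "maps_at K t x" using tree_dominated_maps_at[OF dom t] ..
  moreover from this have "x \<in> verts K" by (cases t) simp
  ultimately show False using none by blast
qed

(* Along an arc v - w (either orientation), every x in the profile of v has a neighbour,
   in the same orientation, in the profile of w: otherwise a tree at w excluding all
   neighbours of x, hung below a new root at v, would not map to K at x. *)
lemma tree_profile_step:
  assumes dG: "digraph G" and dK: "digraph K"
    and vw: "orient b v w \<in> arcs G" and x: "x \<in> tree_profile G K v"
  shows "\<exists>y\<in>tree_profile G K w. orient b x y \<in> arcs K"
proof (rule ccontr)
  assume no: "\<not> ?thesis"
  let ?Y = "{y. orient b x y \<in> arcs K}"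
  have finK: "finite (verts K)" and subK: "arcs K \<subseteq> verts K \<times> verts K"
    and subG: "arcs G \<subseteq> verts G \<times> verts G"
    using dG dK by (auto simp: digraph_def)
  have Y_sub: "?Y \<subseteq> verts K" using subK by (cases b) auto
  have v: "v \<in> verts G" and w: "w \<in> verts G" using vw subG by (cases b; auto)+
  have "\<forall>y\<in>?Y. \<exists>t. maps_at G t w \<and> \<not> maps_at K t y"
  proof
    fix y assume "y \<in> ?Y"
    then show "\<exists>t. maps_at G t w \<and> \<not> maps_at K t y"
      using no Y_sub by (intro not_in_tree_profile) auto
  qed
  then obtain t where t: "maps_at G t w" and sep: "\<forall>y\<in>?Y. \<not> maps_at K t y"
    using separating_tree[OF finite_subset[OF Y_sub finK] w] by blast
  have "maps_at G (Node [(b, t)]) v" using v vw t by auto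
  then have "maps_at K (Node [(b, t)]) x"
    using x by (simp add: tree_profile_def del: maps_at.simps)
  then show False using sep by auto
qed

lemma tree_dominated_imp_power_hom:
  assumes dG: "digraph G" and dK: "digraph K" and dom: "tree_dominated G K"
  shows "G \<rightarrow>\<^sub>h power_digraph K"
proof -
  let ?L = "tree_profile G K"
  have subG: "arcs G \<subseteq> verts G \<times> verts G" using dG by (simp add: digraph_def)
  note nonempty = tree_profile_nonempty[OF dK dom]
  note step = tree_profile_step[OF dG dK]
  have "is_hom ?L G (power_digraph K)"
    unfolding is_hom_def verts_power arcs_power
  proof (intro conjI allI impI ballI)
    fix v assume "v \<in> verts G"
    then show "?L v \<in> {X. X \<subseteq> verts K \<and> X \<noteq> {}}"
      using nonempty by (auto simp: tree_profile_def)
  next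
    fix u v assume uv: "(u, v) \<in> arcs G"
    then have "u \<in> verts G" "v \<in> verts G" using subG by auto
    then show "(?L u, ?L v) \<in> {(X, Y). X \<subseteq> verts K \<and> X \<noteq> {} \<and> Y \<subseteq> verts K \<and> Y \<noteq> {} \<and>
        (\<forall>x\<in>X. \<exists>y\<in>Y. (x, y) \<in> arcs K) \<and> (\<forall>y\<in>Y. \<exists>x\<in>X. (x, y) \<in> arcs K)}"
      using nonempty step[of True u v] step[of False v u] uv by (auto simp: tree_profile_def)
  qed
  then show ?thesis unfolding hom_to_def by blast
qed

(* pendant F l n b: the arc orient b l n is the only arc of F incident with l, so l is
   a leaf with neighbour n. Deleting a pendant vertex and its arc is the induction step
   for oriented trees. *)
definition pendant :: "'a digraph \<Rightarrow> 'a \<Rightarrow> 'a \<Rightarrow> bool \<Rightarrow> bool" where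
  "pendant F l n b \<longleftrightarrow> orient b l n \<in> arcs F \<and>
     (\<forall>u v. (u, v) \<in> arcs F \<longrightarrow> u = l \<or> v = l \<longrightarrow> (u, v) = orient b l n)"

definition delete_pendant :: "'a digraph \<Rightarrow> 'a \<Rightarrow> 'a \<Rightarrow> bool \<Rightarrow> 'a digraph" where
  "delete_pendant F l n b = (verts F - {l}, arcs F - {orient b l n})"

lemma verts_delete_pendant [simp]: "verts (delete_pendant F l n b) = verts F - {l}"
  and arcs_delete_pendant [simp]: "arcs (delete_pendant F l n b) = arcs F - {orient b l n}"
  by (simp_all add: delete_pendant_def verts_def arcs_def)

lemma degree_sum:
  assumes finV: "finite V" and sub: "A \<subseteq> V \<times> V" and loopless: "\<forall>(u, v)\<in>A. u \<noteq> v"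
  shows "(\<Sum>v\<in>V. card {e\<in>A. fst e = v \<or> snd e = v}) = 2 * card A"
proof -
  have finA: "finite A" using finV sub by (meson finite_SigmaI finite_subset)
  have "card {e\<in>A. fst e = v \<or> snd e = v} =
        (\<Sum>e\<in>A. (if fst e = v then 1 else 0) + (if snd e = v then 1 else 0))" for v
  proof -
    have "card {e\<in>A. fst e = v \<or> snd e = v} = (\<Sum>e\<in>A. if fst e = v \<or> snd e = v then 1 else 0)"
      using finA by (simp add: sum.inter_filter[symmetric])
    also have "\<dots> = (\<Sum>e\<in>A. (if fst e = v then 1 else 0) + (if snd e = v then 1 else 0))"
      using loopless by (intro sum.cong) auto
    finally show ?thesis .
  qed
  then have "(\<Sum>v\<in>V. card {e\<in>A. fst e = v \<or> snd e = v}) =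
      (\<Sum>e\<in>A. \<Sum>v\<in>V. (if fst e = v then 1 else 0) + (if snd e = v then 1 else (0::nat)))"
    by (simp add: sum.swap[of _ V])
  also have "\<dots> = (\<Sum>e\<in>A. 2)"
    using sub finV by (intro sum.cong) (auto simp: sum.distrib)
  finally show ?thesis by simp
qed

(* An oriented tree with at least two vertices has a leaf: otherwise every vertex has
   degree at least two, and the degree sum exceeds 2 * |A| = 2 * |V| - 2. *)
lemma pendant_exists:
  assumes T: "oriented_tree F" and two: "card (verts F) \<ge> 2"
  shows "\<exists>l n b. pendant F l n b"
proof (rule ccontr)
  assume none: "\<not> ?thesis"
  let ?V = "verts F" and ?A = "arcs F"
  define inc where "inc v = {e\<in>?A. fst e = v \<or> snd e = v}" for v
  have finV: "finite ?V" and sub: "?A \<subseteq> ?V \<times> ?V" and loopless: "\<forall>(u, v)\<in>?A. u \<noteq> v"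
    and conn: "\<And>u v. u \<in> ?V \<Longrightarrow> v \<in> ?V \<Longrightarrow> (u, v) \<in> (links F)\<^sup>*"
    and card_tree: "card ?A + 1 = card ?V"
    using T unfolding oriented_tree_def digraph_def by auto
  have finA: "finite ?A" using finV sub by (meson finite_SigmaI finite_subset)
  have incident: "\<exists>e. e \<in> inc v" if v: "v \<in> ?V" for v
  proof -
    obtain w where w: "w \<in> ?V" "w \<noteq> v"
      using two v finV by (metis card_le_Suc0_iff_eq not_less_eq_eq numeral_2_eq_2)
    from conn[OF v w(1)] w(2) obtain z where "(v, z) \<in> links F"
      by (metis converse_rtranclE)
    then show ?thesis unfolding inc_def by force
  qed
  have two_incident: "card (inc v) \<ge> 2" if v: "v \<in> ?V" for v
  proof -
    obtain e where e: "e \<in> inc v" using incident[OF v] ..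
    have "\<exists>e'\<in>inc v. e' \<noteq> e"
    proof (cases "fst e = v")
      case True
      then have "\<not> pendant F v (snd e) True" using none by blast
      then show ?thesis using e True unfolding inc_def pendant_def by (cases e) auto
    next
      case False
      then have "\<not> pendant F v (fst e) False" using none by blast
      then show ?thesis using e False unfolding inc_def pendant_def by (cases e) auto
    qed
    then obtain e' where e': "e' \<in> inc v" "e' \<noteq> e" by blast
    have "card {e, e'} \<le> card (inc v)"
      using e e' finA by (intro card_mono) (auto simp: inc_def)
    then show ?thesis using e' by simp
  qed
  have "2 * card ?V = (\<Sum>v\<in>?V. 2)" by simp
  also have "\<dots> \<le> (\<Sum>v\<in>?V. card (inc v))" using two_incident by (rule sum_mono)
  also have "\<dots> = 2 * card ?A" unfolding inc_def using finV sub loopless by (rule degree_sum)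
  finally show False using card_tree by simp
qed

lemma links_delete_pendant:
  assumes pend: "pendant F l n b" and loopless: "(l, l) \<notin> links F"
    and path: "(u, w) \<in> (links F)\<^sup>*" and u: "u \<noteq> l"
  shows "(w \<noteq> l \<longrightarrow> (u, w) \<in> (links (delete_pendant F l n b))\<^sup>*) \<and>
         (w = l \<longrightarrow> (u, n) \<in> (links (delete_pendant F l n b))\<^sup>*)"
  using path
proof (induction w rule: rtrancl_induct)
  case base
  then show ?case using u by simp
next
  case (step y z)
  have to_l: "y = n" if "(y, l) \<in> links F" for y
    using pend that unfolding pendant_def by (cases b) auto
  have from_l: "z = n" if "(l, z) \<in> links F" for z
    using pend that unfolding pendant_def by (cases b) auto
  show ?case
  proof (cases "z = l")
    case True
    then have "y \<noteq> l" "y = n" using step.hyps(2) loopless to_l by auto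
    then show ?thesis using step.IH True by simp
  next
    case z: False
    show ?thesis
    proof (cases "y = l")
      case True
      then have "z = n" using step.hyps(2) from_l by simp
      then show ?thesis using step.IH True z by simp
    next
      case False
      then have "(y, z) \<in> links (delete_pendant F l n b)" using step.hyps(2) z by auto
      then show ?thesis using step.IH False z by (meson rtrancl_into_rtrancl)
    qed
  qed
qed

lemma oriented_tree_delete_pendant:
  assumes T: "oriented_tree F" and pend: "pendant F l n b"
  shows "oriented_tree (delete_pendant F l n b)"
proof -
  let ?V = "verts F" and ?A = "arcs F" and ?F' = "delete_pendant F l n b"
  have finV: "finite ?V" and sub: "?A \<subseteq> ?V \<times> ?V"
    and oriented: "\<And>u v. (u, v) \<in> ?A \<Longrightarrow> u \<noteq> v \<and> (v, u) \<notin> ?A"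
    and conn: "\<And>u v. u \<in> ?V \<Longrightarrow> v \<in> ?V \<Longrightarrow> (u, v) \<in> (links F)\<^sup>*"
    and card_tree: "card ?A + 1 = card ?V"
    using T unfolding oriented_tree_def digraph_def by auto
  have finA: "finite ?A" using finV sub by (meson finite_SigmaI finite_subset)
  have e: "orient b l n \<in> ?A" using pend by (simp add: pendant_def)
  then have l: "l \<in> ?V" and n: "n \<in> ?V" "n \<noteq> l" using sub oriented by (cases b; auto)+
  have away: "u \<noteq> l \<and> v \<noteq> l" if "(u, v) \<in> ?A" "(u, v) \<noteq> orient b l n" for u v
    using that pend unfolding pendant_def by auto
  have "arcs ?F' \<subseteq> verts ?F' \<times> verts ?F'"
  proof
    fix e assume "e \<in> arcs ?F'"
    moreover obtain u v where "e = (u, v)" by fastforce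
    ultimately show "e \<in> verts ?F' \<times> verts ?F'" using sub away[of u v] by auto
  qed
  then have "digraph ?F'" using finV by (simp add: digraph_def)
  moreover have "card (arcs ?F') + 1 = card (verts ?F')"
  proof -
    have "card ?A > 0" using e finA card_gt_0_iff by blast
    then show ?thesis using card_tree e l finA finV by (simp add: card_Diff_singleton)
  qed
  moreover have "\<forall>u\<in>verts ?F'. \<forall>v\<in>verts ?F'. (u, v) \<in> (links ?F')\<^sup>*"
    using links_delete_pendant[OF pend] oriented conn by fastforce
  ultimately show ?thesis
    using n oriented unfolding oriented_tree_def by auto
qed

lemma hom_orient: "is_hom f G H \<Longrightarrow> orient b u v \<in> arcs G \<Longrightarrow> orient b (f u) (f v) \<in> arcs H"
  by (cases b) (auto simp: is_hom_def)

(* A homomorphism f' into H, defined on F minus a pendant vertex l and choosing from g,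
   extends to l: g maps the pendant arc to an arc of P(H), so g l contains an element
   adjacent to the image of the neighbour n. *)
lemma power_hom_extend_pendant:
  assumes g: "is_hom g F (power_digraph H)" and pend: "pendant F l n b" and n: "n \<in> verts F - {l}"
    and f': "is_hom f' (delete_pendant F l n b) H" "\<forall>v\<in>verts F - {l}. f' v \<in> g v"
  shows "\<exists>f. is_hom f F H \<and> (\<forall>v\<in>verts F. f v \<in> g v)"
proof -
  have e: "orient b l n \<in> arcs F" using pend by (simp add: pendant_def)
  have "orient b (g l) (g n) \<in> arcs (power_digraph H)" using hom_orient[OF g e] .
  moreover have "f' n \<in> g n" using f'(2) n by blast
  ultimately obtain a where a: "a \<in> g l" and arc: "orient b a (f' n) \<in> arcs H"
    by (rule power_arc_pull[THEN bexE])
  define f where "f = f'(l := a)"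
  have g_verts: "g v \<subseteq> verts H" if "v \<in> verts F" for v
    using g that unfolding is_hom_def verts_power by blast
  have "is_hom f F H"
    unfolding is_hom_def
  proof (intro conjI allI impI ballI)
    fix v assume "v \<in> verts F"
    then show "f v \<in> verts H" using f'(2) a g_verts by (auto simp: f_def)
  next
    fix u v assume uv: "(u, v) \<in> arcs F"
    show "(f u, f v) \<in> arcs H"
    proof (cases "(u, v) = orient b l n")
      case True
      then show ?thesis using arc n by (cases b) (auto simp: f_def)
    next
      case False
      then have "u \<noteq> l" "v \<noteq> l" using pend uv unfolding pendant_def by auto
      then show ?thesis using f'(1) uv False unfolding is_hom_def f_def by auto
    qed
  qed
  moreover have "\<forall>v\<in>verts F. f v \<in> g v" using f'(2) a by (auto simp: f_def)
  ultimately show ?thesis by blast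
qed

lemma oriented_tree_power_hom:
  assumes "oriented_tree F" and "is_hom g F (power_digraph H)"
  shows "\<exists>f. is_hom f F H \<and> (\<forall>v\<in>verts F. f v \<in> g v)"
  using assms
proof (induction "card (verts F)" arbitrary: F rule: less_induct)
  case less
  note T = less.prems(1) and g = less.prems(2)
  have finV: "finite (verts F)" and neV: "verts F \<noteq> {}"
    and sub: "arcs F \<subseteq> verts F \<times> verts F" and card_tree: "card (arcs F) + 1 = card (verts F)"
    using T by (auto simp: oriented_tree_def digraph_def)
  show ?case
  proof (cases "card (verts F) \<ge> 2")
    case False
    moreover have "card (verts F) > 0" using finV neV by (simp add: card_gt_0_iff)
    ultimately have "card (verts F) = 1" by linarith
    then obtain v where V: "verts F = {v}" by (rule card_1_singletonE)
    have "arcs F = {}" using card_tree V sub finite_subset[OF sub] by simp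
    moreover obtain a where a: "a \<in> g v" "a \<in> verts H"
      using g V unfolding is_hom_def verts_power by blast
    ultimately have "is_hom (\<lambda>_. a) F H" using V by (auto simp: is_hom_def)
    then show ?thesis using a V by auto
  next
    case True
    then obtain l n b where pend: "pendant F l n b" using pendant_exists[OF T] by blast
    let ?F' = "delete_pendant F l n b"
    have e: "orient b l n \<in> arcs F" using pend by (simp add: pendant_def)
    have l: "l \<in> verts F" and n: "n \<in> verts F - {l}"
      using e T unfolding oriented_tree_def digraph_def by (cases b; auto)+
    have smaller: "card (verts ?F') < card (verts F)" using card_Diff1_less[OF finV l] by simp
    have "is_hom g ?F' (power_digraph H)" using g by (auto simp: is_hom_def)
    with less.hyps[OF smaller oriented_tree_delete_pendant[OF T pend]]
    obtain f' where "is_hom f' ?F' H" "\<forall>v\<in>verts F - {l}. f' v \<in> g v" by auto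
    then show ?thesis using power_hom_extend_pendant[OF g pend n] by blast
  qed
qed

(* First half of the characterisation: tree duality implies P(H) \<rightarrow> H. No tree
   obstruction F maps to P(H), since it would then map to H, which it cannot as F \<rightarrow> F. *)
lemma tree_duality_imp_power_hom:
  assumes dH: "digraph H" and td: "tree_duality H"
  shows "power_digraph H \<rightarrow>\<^sub>h H"
proof -
  obtain \<F> where trees: "\<forall>F\<in>\<F>. oriented_tree F" and obs: "complete_obstructions \<F> H"
    using td unfolding tree_duality_def by blast
  have obs_dig: "\<forall>F\<in>\<F>. digraph F"
    and duality: "\<And>G :: nat digraph. digraph G \<Longrightarrow> G \<rightarrow>\<^sub>h H \<longleftrightarrow> \<not> (\<exists>F\<in>\<F>. F \<rightarrow>\<^sub>h G)"
    using obs unfolding complete_obstructions_def by blast+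
  have dP: "digraph (power_digraph H)" using dH by (rule digraph_power)
  then obtain h :: "'a set \<Rightarrow> nat" where h: "inj_on h (verts (power_digraph H))"
    by (rule nat_relabelling)
  note iso = relabel_iso[OF dP h]
  have no_obstruction: "\<not> F \<rightarrow>\<^sub>h relabel h (power_digraph H)" if F: "F \<in> \<F>" for F
  proof
    assume "F \<rightarrow>\<^sub>h relabel h (power_digraph H)"
    then have "F \<rightarrow>\<^sub>h power_digraph H" using iso(2) by blast
    then obtain g where "is_hom g F (power_digraph H)" unfolding hom_to_def ..
    then have "F \<rightarrow>\<^sub>h H"
      using oriented_tree_power_hom trees F unfolding hom_to_def by blast
    moreover have "\<not> F \<rightarrow>\<^sub>h H" using duality[of F] obs_dig F hom_to_refl by blast
    ultimately show False by contradiction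
  qed
  have "relabel h (power_digraph H) \<rightarrow>\<^sub>h H"
    using duality[OF digraph_relabel[OF dP]] no_obstruction by blast
  then show ?thesis using iso(1) by blast
qed

(* Second half: if P(K) \<rightarrow> K then the oriented trees not mapping to K form a complete
   set of obstructions, because a tree-dominated G maps to P(K) and hence to K. *)
lemma power_hom_imp_tree_duality:
  fixes K :: "'b digraph"
  assumes dK: "digraph K" and retract: "power_digraph K \<rightarrow>\<^sub>h K"
  shows "tree_duality K"
proof -
  define \<F> where "\<F> = {F :: nat digraph. oriented_tree F \<and> \<not> F \<rightarrow>\<^sub>h K}"
  have "G \<rightarrow>\<^sub>h K \<longleftrightarrow> \<not> (\<exists>F\<in>\<F>. F \<rightarrow>\<^sub>h G)" if dG: "digraph G" for G :: "nat digraph"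
  proof
    assume "G \<rightarrow>\<^sub>h K"
    then show "\<not> (\<exists>F\<in>\<F>. F \<rightarrow>\<^sub>h G)" unfolding \<F>_def using hom_to_trans by blast
  next
    assume "\<not> (\<exists>F\<in>\<F>. F \<rightarrow>\<^sub>h G)"
    then have "tree_dominated G K" unfolding \<F>_def tree_dominated_def by blast
    with dG dK have "G \<rightarrow>\<^sub>h power_digraph K" by (rule tree_dominated_imp_power_hom)
    then show "G \<rightarrow>\<^sub>h K" using retract by (rule hom_to_trans)
  qed
  moreover have "\<forall>F\<in>\<F>. oriented_tree F" "\<forall>F\<in>\<F>. digraph F"
    by (auto simp: \<F>_def oriented_tree_def)
  ultimately show ?thesis unfolding tree_duality_def complete_obstructions_def by blast
qed

lemma verts_arc_graph [simp]: "verts (arc_graph H) = arcs H"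
  and arcs_arc_graph [simp]:
    "arcs (arc_graph H) = {((u, v), (v', w)). (u, v) \<in> arcs H \<and> (v', w) \<in> arcs H \<and> v' = v}"
  by (simp_all add: arc_graph_def verts_def arcs_def)

lemma digraph_arc_graph: "digraph H \<Longrightarrow> digraph (arc_graph H)"
  unfolding digraph_def by (auto intro: finite_subset)

(* A homomorphism \<phi>: P(H) \<rightarrow> H induces P(\<delta>H) \<rightarrow> \<delta>H, X \<mapsto> (\<phi>(tails of X), \<phi>(heads of X)):
   if X \<rightarrow> Y in P(\<delta>H) then the heads of X are exactly the tails of Y. *)
lemma power_hom_arc_graph:
  assumes dH: "digraph H" and "power_digraph H \<rightarrow>\<^sub>h H"
  shows "power_digraph (arc_graph H) \<rightarrow>\<^sub>h arc_graph H"
proof -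
  obtain \<phi> where \<phi>: "is_hom \<phi> (power_digraph H) H" using assms(2) unfolding hom_to_def ..
  define \<psi> where "\<psi> X = (\<phi> (fst ` X), \<phi> (snd ` X))" for X
  have sub: "arcs H \<subseteq> verts H \<times> verts H" using dH by (simp add: digraph_def)
  have \<psi>_arc: "\<psi> X \<in> arcs H" if "X \<subseteq> arcs H" "X \<noteq> {}" for X
  proof -
    have "(fst ` X, snd ` X) \<in> arcs (power_digraph H)"
      unfolding arcs_power using that sub by force
    then show ?thesis using \<phi> unfolding is_hom_def \<psi>_def by blast
  qed
  have "is_hom \<psi> (power_digraph (arc_graph H)) (arc_graph H)"
    unfolding is_hom_def
  proof (intro conjI allI impI ballI)
    fix X assume "X \<in> verts (power_digraph (arc_graph H))"
    then show "\<psi> X \<in> verts (arc_graph H)" using \<psi>_arc by (simp add: verts_power)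
  next
    fix X Y assume XY: "(X, Y) \<in> arcs (power_digraph (arc_graph H))"
    then have X: "X \<subseteq> arcs H" "X \<noteq> {}" and Y: "Y \<subseteq> arcs H" "Y \<noteq> {}"
      by (auto simp: arcs_power)
    have consecutive: "snd a = fst b" if "(a, b) \<in> arcs (arc_graph H)" for a b
      using that by (cases a, cases b) simp
    have "\<forall>a\<in>X. \<exists>b\<in>Y. (a, b) \<in> arcs (arc_graph H)" "\<forall>b\<in>Y. \<exists>a\<in>X. (a, b) \<in> arcs (arc_graph H)"
      using XY unfolding arcs_power by blast+
    then have "\<forall>a\<in>X. \<exists>b\<in>Y. snd a = fst b" "\<forall>b\<in>Y. \<exists>a\<in>X. snd a = fst b"
      using consecutive by blast+
    then have "snd ` X = fst ` Y" by force
    then show "(\<psi> X, \<psi> Y) \<in> arcs (arc_graph H)"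
      using \<psi>_arc[OF X] \<psi>_arc[OF Y] by (simp add: \<psi>_def)
  qed
  then show ?thesis by (auto simp: hom_to_def)
qed

theorem corollary2p4:
  fixes H :: "'a digraph"
  assumes "digraph H" and "tree_duality H"
  shows "tree_duality (arc_graph H)"
proof -
  have "power_digraph H \<rightarrow>\<^sub>h H"
    using assms by (rule tree_duality_imp_power_hom)
  with \<open>digraph H\<close> have "power_digraph (arc_graph H) \<rightarrow>\<^sub>h arc_graph H"
    by (rule power_hom_arc_graph)
  with digraph_arc_graph[OF \<open>digraph H\<close>] show ?thesis
    by (rule power_hom_imp_tree_duality)
qed

end
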